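(* Let $Q$ be a complete quiver with at least one frozen vertex, and let $\mathbf M=m_1m_2\cdots$ be an infinite mutation sequence which is reduced, weakly balanced and cycle-preserving, and such that $m_1$ is not the apex of a vortex in $Q$. Then $Q$ is eventually sign-coherent on $\mathbf M$: there is $T$ such that $Q^{(j)}_{\mathbf M}$ is sign-coherent for all $j>T$.
   Context: A quiver is a finite directed multigraph with no loops and no oriented 2-cycles, whose vertex set is partitioned into mutable and frozen vertices; arrows between two frozen vertices are ignored. $Q|_S$ is the induced subquiver on $S$. Mutation $\mu_j$ at mutable $j$: for each path $i\to j\to k$ with $a$ arrows $i\to j$ and $b$ arrows $j\to k$ add $ab$ arrows $i\to k$, reverse all arrows at $j$, cancel 2-cycles. A mutation sequence $\mathbf M=m_1m_2\cdots$ is a sequence of mutable vertices; $Q^{(0)}_{\mathbf M}=Q$, $Q^{(i)}_{\mathbf M}=\mu_{m_i}(Q^{(i-1)}_{\mathbf M})$. It is reduced if $m_i\neq m_{i+1}$ for all $i$, and weakly balanced if every mutable vertex occurs infinitely often. Complete: at least one arrow between every pair of vertices at least one of which is mutable. A 3-vertex (sub)quiver is an oriented 3-cycle if it has at most one frozen vertex and its underlying directed graph is not acyclic. A mutable vertex $j$ is cycle-preserving for $Q$ if whenever $Q|_{\{i,j,k\}}$ is an oriented 3-cycle containing $j$, so is $\mu_j(Q)|_{\{i,j,k\}}$; $\mathbf M$ is cycle-preserving if $m_\ell$ is cycle-preserving for $Q^{(\ell-1)}_{\mathbf M}$ for every $\ell\ge1$. A vortex is a quiver on four vertices, at least three mutable,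 in which one vertex (the apex) is a source or sink and the other three support an oriented cycle; $j$ is the apex of a vortex in $Q$ if it is the apex of some 4-vertex induced subquiver that is a vortex. A mutable vertex adjacent to at least one frozen vertex is red (resp. green) if all arrows between it and frozen vertices point towards (resp. away from) it; a quiver is sign-coherent if every mutable vertex is red or green. *)

theory Defs
  imports Main
begin

text \<open>A quiver on a finite vertex set V with mutable vertices M (frozen vertices V - M)
is encoded by its exchange matrix B: B i k = (number of arrows i to k) - (number of arrows k to i).
Since there are no loops and no oriented 2-cycles this determines the quiver.
Entries between two frozen vertices are ignored by every notion below.\<close>

definition quiver :: "'v set \<Rightarrow> 'v set \<Rightarrow> ('v \<Rightarrow> 'v \<Rightarrow> int) \<Rightarrow> bool" where
  "quiver V M B \<longleftrightarrow> finite V \<and> M \<subseteq> V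
     \<and> (\<forall>i k. B i k = - B k i)
     \<and> (\<forall>i k. i \<notin> V \<or> k \<notin> V \<longrightarrow> B i k = 0)"

definition mutate :: "'v \<Rightarrow> ('v \<Rightarrow> 'v \<Rightarrow> int) \<Rightarrow> ('v \<Rightarrow> 'v \<Rightarrow> int)" where
  "mutate j B = (\<lambda>i k. if i = j \<or> k = j then - B i k
      else B i k + max (B i j) 0 * max (B j k) 0 - max (- B i j) 0 * max (- B j k) 0)"

text \<open>Q^(n) along the mutation sequence m, where m l is the (l+1)-st mutation m_{l+1}.\<close>
primrec mutseq :: "('v \<Rightarrow> 'v \<Rightarrow> int) \<Rightarrow> (nat \<Rightarrow> 'v) \<Rightarrow> nat \<Rightarrow> ('v \<Rightarrow> 'v \<Rightarrow> int)" where
  "mutseq B m 0 = B"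
| "mutseq B m (Suc n) = mutate (m n) (mutseq B m n)"

definition complete_quiver :: "'v set \<Rightarrow> 'v set \<Rightarrow> ('v \<Rightarrow> 'v \<Rightarrow> int) \<Rightarrow> bool" where
  "complete_quiver V M B \<longleftrightarrow>
     (\<forall>i\<in>V. \<forall>k\<in>V. i \<noteq> k \<and> (i \<in> M \<or> k \<in> M) \<longrightarrow> B i k \<noteq> 0)"

definition cyclic3 :: "('v \<Rightarrow> 'v \<Rightarrow> int) \<Rightarrow> 'v \<Rightarrow> 'v \<Rightarrow> 'v \<Rightarrow> bool" where
  "cyclic3 B i j k \<longleftrightarrow>
     (B i j > 0 \<and> B j k > 0 \<and> B k i > 0) \<or> (B j i > 0 \<and> B k j > 0 \<and> B i k > 0)"

definition oriented_3cycle :: "'v set \<Rightarrow> 'v set \<Rightarrow> ('v \<Rightarrow> 'v \<Rightarrow> int) \<Rightarrow> 'v \<Rightarrow> 'v \<Rightarrow> 'v \<Rightarrow> bool" where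
  "oriented_3cycle V M B i j k \<longleftrightarrow>
     i \<in> V \<and> j \<in> V \<and> k \<in> V \<and> distinct [i, j, k]
     \<and> card ({i, j, k} - M) \<le> 1 \<and> cyclic3 B i j k"

definition cycle_preserving :: "'v set \<Rightarrow> 'v set \<Rightarrow> ('v \<Rightarrow> 'v \<Rightarrow> int) \<Rightarrow> 'v \<Rightarrow> bool" where
  "cycle_preserving V M B j \<longleftrightarrow> j \<in> M \<and>
     (\<forall>i k. oriented_3cycle V M B i j k \<longrightarrow> oriented_3cycle V M (mutate j B) i j k)"

definition vortex_apex :: "'v set \<Rightarrow> 'v set \<Rightarrow> ('v \<Rightarrow> 'v \<Rightarrow> int) \<Rightarrow> 'v \<Rightarrow> bool" where
  "vortex_apex V M B j \<longleftrightarrow> (\<exists>a b c. j \<in> V \<and> a \<in> V \<and> b \<in> V \<and> c \<in> V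
     \<and> distinct [j, a, b, c] \<and> card ({j, a, b, c} \<inter> M) \<ge> 3
     \<and> ((\<forall>x\<in>{a, b, c}. B x j \<le> 0) \<or> (\<forall>x\<in>{a, b, c}. B j x \<le> 0))
     \<and> cyclic3 B a b c)"

definition red :: "'v set \<Rightarrow> 'v set \<Rightarrow> ('v \<Rightarrow> 'v \<Rightarrow> int) \<Rightarrow> 'v \<Rightarrow> bool" where
  "red V M B v \<longleftrightarrow> v \<in> M \<and> (\<exists>f\<in>V - M. B v f \<noteq> 0) \<and> (\<forall>f\<in>V - M. B f v \<ge> 0)"

definition green :: "'v set \<Rightarrow> 'v set \<Rightarrow> ('v \<Rightarrow> 'v \<Rightarrow> int) \<Rightarrow> 'v \<Rightarrow> bool" where
  "green V M B v \<longleftrightarrow> v \<in> M \<and> (\<exists>f\<in>V - M. B v f \<noteq> 0) \<and> (\<forall>f\<in>V - M. B v f \<ge> 0)"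

definition sign_coherent :: "'v set \<Rightarrow> 'v set \<Rightarrow> ('v \<Rightarrow> 'v \<Rightarrow> int) \<Rightarrow> bool" where
  "sign_coherent V M B \<longleftrightarrow> (\<forall>v\<in>M. red V M B v \<or> green V M B v)"

end

theory Submission
  imports Defs
begin

text \<open>Along a cycle-preserving sequence a complete quiver stays complete, and only the orientation
of its arrows matters: mutation at \<open>k\<close> reverses the arrows at \<open>k\<close> and the side opposite \<open>k\<close> of
every oriented 3-cycle through \<open>k\<close>. Right after a mutation at \<open>r\<close>, every 2-path through \<open>r\<close>
closes to an oriented 3-cycle and no oriented 3-cycle avoids \<open>r\<close>. These two properties propagate
along the sequence, the second one because mutation at \<open>k\<close> can only produce an oriented 3-cycle
avoiding \<open>k\<close> from a vortex with apex \<open>k\<close>; at the first step this is excluded by hypothesis.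
Under these invariants a mutable vertex \<open>v\<close> on a path \<open>f \<rightarrow> v \<rightarrow> g\<close> between frozen vertices
already lay on such a path one step earlier, and was not the vertex mutated the step before.
So once \<open>v\<close> has been mutated it never again lies between two frozen vertices, i.e. it stays red
or green, and weak balance makes this happen for every mutable vertex.\<close>

definition relevant :: "'v set \<Rightarrow> 'v set \<Rightarrow> 'v \<Rightarrow> 'v \<Rightarrow> bool" where
  "relevant V M u w \<longleftrightarrow> u \<in> V \<and> w \<in> V \<and> u \<noteq> w \<and> (u \<in> M \<or> w \<in> M)"

definition relevant_triangle :: "'v set \<Rightarrow> 'v set \<Rightarrow> 'v \<Rightarrow> 'v \<Rightarrow> 'v \<Rightarrow> bool" where
  "relevant_triangle V M a b c \<longleftrightarrow> relevant V M a b \<and> relevant V M b c \<and> relevant V M c a"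

text \<open>Arrows between two frozen vertices are dropped, which makes \<open>orientation\<close> commute exactly
with mutation (lemma \<open>orientation_mutate\<close>).\<close>

definition orientation :: "'v set \<Rightarrow> 'v set \<Rightarrow> ('v \<Rightarrow> 'v \<Rightarrow> int) \<Rightarrow> 'v \<Rightarrow> 'v \<Rightarrow> bool" where
  "orientation V M B u w \<longleftrightarrow> relevant V M u w \<and> 0 < B u w"

definition tournament :: "'v set \<Rightarrow> 'v set \<Rightarrow> ('v \<Rightarrow> 'v \<Rightarrow> bool) \<Rightarrow> bool" where
  "tournament V M A \<longleftrightarrow> (\<forall>u w. relevant V M u w \<longrightarrow> (A u w \<longleftrightarrow> \<not> A w u))"

definition cyclic_triangle :: "('v \<Rightarrow> 'v \<Rightarrow> bool) \<Rightarrow> 'v \<Rightarrow> 'v \<Rightarrow> 'v \<Rightarrow> bool" where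
  "cyclic_triangle A a b c \<longleftrightarrow> (A a b \<and> A b c \<and> A c a) \<or> (A b a \<and> A c b \<and> A a c)"

definition mutate_orientation :: "'v \<Rightarrow> ('v \<Rightarrow> 'v \<Rightarrow> bool) \<Rightarrow> 'v \<Rightarrow> 'v \<Rightarrow> bool" where
  "mutate_orientation k A u w =
     (if u = k \<or> w = k then A w u else A u w \<noteq> cyclic_triangle A u k w)"

definition vortex :: "('v \<Rightarrow> 'v \<Rightarrow> bool) \<Rightarrow> 'v \<Rightarrow> 'v \<Rightarrow> 'v \<Rightarrow> 'v \<Rightarrow> bool" where
  "vortex A k a b c \<longleftrightarrow>
     cyclic_triangle A a b c \<and> ((\<forall>x\<in>{a, b, c}. A x k) \<or> (\<forall>x\<in>{a, b, c}. A k x))"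

definition no_vortex_at :: "'v set \<Rightarrow> 'v set \<Rightarrow> ('v \<Rightarrow> 'v \<Rightarrow> bool) \<Rightarrow> 'v \<Rightarrow> bool" where
  "no_vortex_at V M A k \<longleftrightarrow>
     (\<forall>a b c. relevant_triangle V M a b c \<and> k \<notin> {a, b, c} \<longrightarrow> \<not> vortex A k a b c)"

definition paths_through_cyclic :: "'v set \<Rightarrow> 'v set \<Rightarrow> ('v \<Rightarrow> 'v \<Rightarrow> bool) \<Rightarrow> 'v \<Rightarrow> bool" where
  "paths_through_cyclic V M A r \<longleftrightarrow>
     (\<forall>u w. relevant V M u w \<and> u \<noteq> r \<and> w \<noteq> r \<and> A w r \<and> A r u \<longrightarrow> A u w)"

definition no_3cycle_avoiding :: "'v set \<Rightarrow> 'v set \<Rightarrow> ('v \<Rightarrow> 'v \<Rightarrow> bool) \<Rightarrow> 'v \<Rightarrow> bool" where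
  "no_3cycle_avoiding V M A r \<longleftrightarrow>
     (\<forall>a b c. relevant_triangle V M a b c \<and> r \<notin> {a, b, c} \<longrightarrow> \<not> cyclic_triangle A a b c)"

text \<open>The state of the orientation right after a mutation at \<open>r\<close>.\<close>

definition settled_at :: "'v set \<Rightarrow> 'v set \<Rightarrow> ('v \<Rightarrow> 'v \<Rightarrow> bool) \<Rightarrow> 'v \<Rightarrow> bool" where
  "settled_at V M A r \<longleftrightarrow> paths_through_cyclic V M A r \<and> no_3cycle_avoiding V M A r"

definition on_frozen_path :: "'v set \<Rightarrow> 'v set \<Rightarrow> ('v \<Rightarrow> 'v \<Rightarrow> bool) \<Rightarrow> 'v \<Rightarrow> bool" where
  "on_frozen_path V M A v \<longleftrightarrow> (\<exists>f\<in>V - M. \<exists>g\<in>V - M. A f v \<and> A v g)"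

lemma relevant_commute: "relevant V M u w \<longleftrightarrow> relevant V M w u"
  by (auto simp: relevant_def)

lemma tournamentD: "tournament V M A \<Longrightarrow> relevant V M u w \<Longrightarrow> A u w \<longleftrightarrow> \<not> A w u"
  unfolding tournament_def by blast

lemma paths_through_cyclicD:
  "paths_through_cyclic V M A r \<Longrightarrow> relevant V M u w \<Longrightarrow> u \<noteq> r \<Longrightarrow> w \<noteq> r \<Longrightarrow> A w r \<Longrightarrow> A r u
    \<Longrightarrow> A u w"
  unfolding paths_through_cyclic_def by blast

lemma cyclic_triangle_reverse: "cyclic_triangle A a b c \<longleftrightarrow> cyclic_triangle A c b a"
  by (auto simp: cyclic_triangle_def)

lemma cyclic_triangle_through:
  assumes "cyclic_triangle A a b c" "distinct [a, b, c]" "r \<in> {a, b, c}"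
  obtains u w where "u \<in> {a, b, c}" "w \<in> {a, b, c}" "u \<noteq> r" "w \<noteq> r" "A w r" "A r u"
  using assms unfolding cyclic_triangle_def by auto

lemma mutate_orientation_off_cycle:
  "u \<noteq> k \<Longrightarrow> w \<noteq> k \<Longrightarrow> \<not> cyclic_triangle A u k w \<Longrightarrow> mutate_orientation k A u w = A u w"
  by (simp add: mutate_orientation_def)

lemma tournament_mutate_orientation:
  assumes "tournament V M A"
  shows "tournament V M (mutate_orientation k A)"
  unfolding tournament_def
proof (intro allI impI)
  fix u w
  assume "relevant V M u w"
  then have "A u w \<longleftrightarrow> \<not> A w u" "A w u \<longleftrightarrow> \<not> A u w"
    using tournamentD[OF assms] relevant_commute by blast+
  then show "mutate_orientation k A u w \<longleftrightarrow> \<not> mutate_orientation k A w u"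
    by (auto simp: mutate_orientation_def cyclic_triangle_reverse[of A w k u])
qed

lemma paths_through_cyclic_mutate_orientation:
  assumes "tournament V M A" "k \<in> M" "M \<subseteq> V"
  shows "paths_through_cyclic V M (mutate_orientation k A) k"
  unfolding paths_through_cyclic_def
proof (intro allI impI)
  fix u w
  assume uw: "relevant V M u w \<and> u \<noteq> k \<and> w \<noteq> k
    \<and> mutate_orientation k A w k \<and> mutate_orientation k A k u"
  then have "relevant V M u k" "relevant V M k w"
    using assms(2,3) by (auto simp: relevant_def)
  then have "A u k \<longleftrightarrow> \<not> A k u" "A k w \<longleftrightarrow> \<not> A w k" "A u w \<longleftrightarrow> \<not> A w u"
    using tournamentD[OF assms(1)] uw by blast+
  then show "mutate_orientation k A u w"
    using uw by (auto simp: mutate_orientation_def cyclic_triangle_def)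
qed

lemma vortex_if_cyclic_triangle_mutate_orientation:
  assumes "tournament V M A" "relevant_triangle V M a b c" "k \<in> M" "k \<in> V" "k \<notin> {a, b, c}"
    and "cyclic_triangle (mutate_orientation k A) a b c"
  shows "vortex A k a b c"
proof -
  have "relevant V M a k" "relevant V M b k" "relevant V M c k"
    "relevant V M a b" "relevant V M b c" "relevant V M c a"
    using assms(2-5) by (auto simp: relevant_triangle_def relevant_def)
  then have "A a k \<longleftrightarrow> \<not> A k a" "A b k \<longleftrightarrow> \<not> A k b" "A c k \<longleftrightarrow> \<not> A k c"
    "A a b \<longleftrightarrow> \<not> A b a" "A b c \<longleftrightarrow> \<not> A c b" "A c a \<longleftrightarrow> \<not> A a c"
    using tournamentD[OF assms(1)] by blast+
  then show ?thesis
    using assms(5,6) by (auto simp: vortex_def cyclic_triangle_def mutate_orientation_def)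
qed

lemma no_3cycle_avoiding_mutate_orientation:
  assumes "tournament V M A" "k \<in> M" "M \<subseteq> V" "no_vortex_at V M A k"
  shows "no_3cycle_avoiding V M (mutate_orientation k A) k"
  using assms vortex_if_cyclic_triangle_mutate_orientation[OF assms(1)]
  unfolding no_3cycle_avoiding_def no_vortex_at_def by blast

lemma settled_at_mutate_orientation:
  assumes "tournament V M A" "k \<in> M" "M \<subseteq> V" "no_vortex_at V M A k"
  shows "settled_at V M (mutate_orientation k A) k"
  using paths_through_cyclic_mutate_orientation[OF assms(1-3)]
    no_3cycle_avoiding_mutate_orientation[OF assms]
  unfolding settled_at_def by blast

lemma no_vortex_at_if_settled_at:
  assumes tour: "tournament V M A" and settled: "settled_at V M A r" and k: "k \<in> M" "M \<subseteq> V"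
  shows "no_vortex_at V M A k"
  unfolding no_vortex_at_def
proof (intro allI impI notI)
  fix a b c
  assume abc: "relevant_triangle V M a b c \<and> k \<notin> {a, b, c}" and "vortex A k a b c"
  have paths: "paths_through_cyclic V M A r" and acyclic: "no_3cycle_avoiding V M A r"
    using settled by (simp_all add: settled_at_def)
  from \<open>vortex A k a b c\<close> have cyc: "cyclic_triangle A a b c"
    and sink_or_source: "(\<forall>x\<in>{a, b, c}. A x k) \<or> (\<forall>x\<in>{a, b, c}. A k x)"
    by (auto simp: vortex_def)
  have "r \<in> {a, b, c}"
    using acyclic abc cyc by (auto simp: no_3cycle_avoiding_def)
  moreover have "distinct [a, b, c]"
    using abc by (auto simp: relevant_triangle_def relevant_def)
  ultimately obtain u w where uw: "u \<in> {a, b, c}" "w \<in> {a, b, c}" "u \<noteq> r" "w \<noteq> r" "A w r" "A r u"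
    using cyc cyclic_triangle_through by metis
  have kr: "k \<noteq> r" "k \<noteq> u" "k \<noteq> w"
    using abc \<open>r \<in> {a, b, c}\<close> uw by auto
  have kw: "relevant V M k w" and uk: "relevant V M u k"
    using abc uw k kr by (auto simp: relevant_triangle_def relevant_def)
  from sink_or_source show False
  proof
    assume "\<forall>x\<in>{a, b, c}. A x k"
    then have "A w k" "A r k"
      using uw \<open>r \<in> {a, b, c}\<close> by auto
    moreover have "A k w"
      using paths_through_cyclicD[OF paths kw] kr uw \<open>A r k\<close> by simp
    ultimately show False
      using tournamentD[OF tour kw] by simp
  next
    assume "\<forall>x\<in>{a, b, c}. A k x"
    then have "A k u" "A k r"
      using uw \<open>r \<in> {a, b, c}\<close> by auto
    moreover have "A u k"
      using paths_through_cyclicD[OF paths uk] kr uw \<open>A k r\<close> by simp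
    ultimately show False
      using tournamentD[OF tour uk] by simp
  qed
qed

lemma not_on_frozen_path_mutate_orientation:
  assumes tour: "tournament V M A" and paths: "paths_through_cyclic V M A r"
    and k: "k \<in> M" "k \<noteq> r" and r: "r \<in> M" and "M \<subseteq> V"
  shows "\<not> on_frozen_path V M (mutate_orientation k A) r"
proof
  assume "on_frozen_path V M (mutate_orientation k A) r"
  then obtain f g where f: "f \<in> V - M" and g: "g \<in> V - M"
    and path: "mutate_orientation k A f r" "mutate_orientation k A r g"
    by (auto simp: on_frozen_path_def)
  have fr: "relevant V M f r" and gr: "relevant V M g r" and kr: "relevant V M k r"
    and fk: "relevant V M f k" and gk: "relevant V M g k"
    using f g k r \<open>M \<subseteq> V\<close> by (auto simp: relevant_def)
  have kf: "relevant V M k f" and kg: "relevant V M k g"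
    using fk gk by (simp_all add: relevant_commute)
  have "A k r \<Longrightarrow> A r g \<Longrightarrow> A g k" "A g r \<Longrightarrow> A r k \<Longrightarrow> A k g"
    "A k r \<Longrightarrow> A r f \<Longrightarrow> A f k" "A f r \<Longrightarrow> A r k \<Longrightarrow> A k f"
    using paths_through_cyclicD[OF paths] fk gk kf kg k f g r by auto
  moreover have "A f r \<longleftrightarrow> \<not> A r f" "A g r \<longleftrightarrow> \<not> A r g" "A k r \<longleftrightarrow> \<not> A r k"
    "A f k \<longleftrightarrow> \<not> A k f" "A g k \<longleftrightarrow> \<not> A k g"
    using tournamentD[OF tour] fr gr kr fk gk by blast+
  moreover have "f \<noteq> k" "g \<noteq> k"
    using f g k by auto
  ultimately show False
    using path k(2) by (auto simp: mutate_orientation_def cyclic_triangle_def)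
qed

lemma on_frozen_path_mutate_orientation:
  assumes tour: "tournament V M A" and settled: "settled_at V M A r"
    and k: "k \<in> M" "k \<noteq> r" and r: "r \<in> M" and "M \<subseteq> V" and v: "v \<in> M"
    and "on_frozen_path V M (mutate_orientation k A) v"
  shows "v \<noteq> r \<and> on_frozen_path V M A v"
proof -
  obtain f g where f: "f \<in> V - M" and g: "g \<in> V - M"
    and path: "mutate_orientation k A f v" "mutate_orientation k A v g"
    using assms(8) by (auto simp: on_frozen_path_def)
  have "v \<noteq> r"
    using not_on_frozen_path_mutate_orientation[OF tour _ k r \<open>M \<subseteq> V\<close>] settled assms(8)
    by (auto simp: settled_at_def)
  show ?thesis
  proof (cases "v = k")
    case True
    then show ?thesis
      using path f g k \<open>v \<noteq> r\<close> by (auto simp: on_frozen_path_def mutate_orientation_def)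
  next
    case False
    have "relevant_triangle V M f k v" "relevant_triangle V M v k g"
      using False f g k v \<open>M \<subseteq> V\<close> by (auto simp: relevant_triangle_def relevant_def)
    then have "\<not> cyclic_triangle A f k v" "\<not> cyclic_triangle A v k g"
      using settled \<open>v \<noteq> r\<close> f g r k by (auto simp: settled_at_def no_3cycle_avoiding_def)
    moreover have "f \<noteq> k" "g \<noteq> k"
      using f g k by auto
    ultimately have "A f v" "A v g"
      using path False by (simp_all add: mutate_orientation_off_cycle)
    then show ?thesis
      using \<open>v \<noteq> r\<close> f g by (auto simp: on_frozen_path_def)
  qed
qed

locale mutation_run =
  fixes V M :: "'v set" and A :: "nat \<Rightarrow> 'v \<Rightarrow> 'v \<Rightarrow> bool" and m :: "nat \<Rightarrow> 'v"
  assumes mutable_subset: "M \<subseteq> V"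
    and tournament_A: "\<And>t. tournament V M (A t)"
    and A_Suc: "\<And>t. A (Suc t) = mutate_orientation (m t) (A t)"
    and mutable_m: "\<And>t. m t \<in> M"
    and reduced: "\<And>t. m (Suc t) \<noteq> m t"
    and no_initial_vortex: "no_vortex_at V M (A 0) (m 0)"
begin

lemma settled_at_Suc: "settled_at V M (A (Suc t)) (m t)"
proof (induction t)
  case 0
  show ?case
    unfolding A_Suc
    by (rule settled_at_mutate_orientation[OF tournament_A mutable_m mutable_subset no_initial_vortex])
next
  case (Suc t)
  have "no_vortex_at V M (A (Suc t)) (m (Suc t))"
    by (rule no_vortex_at_if_settled_at[OF tournament_A Suc.IH mutable_m mutable_subset])
  then show ?case
    unfolding A_Suc[of "Suc t"]
    by (rule settled_at_mutate_orientation[OF tournament_A mutable_m mutable_subset])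
qed

lemma on_frozen_path_previous:
  assumes "v \<in> M" "on_frozen_path V M (A (Suc (Suc t))) v"
  shows "m t \<noteq> v \<and> on_frozen_path V M (A (Suc t)) v"
  using on_frozen_path_mutate_orientation[OF tournament_A settled_at_Suc mutable_m reduced mutable_m
      mutable_subset assms(1)] assms(2)
  unfolding A_Suc[of "Suc t"] by auto

lemma no_frozen_path_after_mutation:
  assumes "v \<in> M" "m s = v" "Suc (Suc s) \<le> t"
  shows "\<not> on_frozen_path V M (A t) v"
  using assms(3)
proof (induction t rule: dec_induct)
  case base
  show ?case
    using on_frozen_path_previous[OF assms(1)] assms(2) by blast
next
  case (step t)
  then obtain t' where "t = Suc t'"
    by (cases t) auto
  then show ?case
    using step.IH on_frozen_path_previous[OF assms(1), of t'] by blast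
qed

lemma eventually_no_frozen_path:
  assumes "finite M" "\<And>v. v \<in> M \<Longrightarrow> \<exists>s. m s = v"
  shows "\<exists>T. \<forall>t>T. \<forall>v\<in>M. \<not> on_frozen_path V M (A t) v"
proof -
  have "eventually (\<lambda>t. \<not> on_frozen_path V M (A t) v) sequentially" if v: "v \<in> M" for v
  proof -
    obtain s where "m s = v"
      using assms(2) v by blast
    then show ?thesis
      unfolding eventually_sequentially using no_frozen_path_after_mutation v by blast
  qed
  then have "eventually (\<lambda>t. \<forall>v\<in>M. \<not> on_frozen_path V M (A t) v) sequentially"
    by (simp add: eventually_ball_finite assms(1))
  then show ?thesis
    unfolding eventually_sequentially by (meson less_imp_le)
qed

end

lemma quiver_antisym: "quiver V M B \<Longrightarrow> B x y = - B y x"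
  unfolding quiver_def by blast

lemma quiver_mutable_subset: "quiver V M B \<Longrightarrow> M \<subseteq> V"
  unfolding quiver_def by blast

lemma quiver_mutate:
  assumes "quiver V M B"
  shows "quiver V M (mutate k B)"
proof -
  have anti: "B x y = - B y x" and outside: "x \<notin> V \<or> y \<notin> V \<Longrightarrow> B x y = 0" for x y
    using assms unfolding quiver_def by blast+
  have "mutate k B i l = - mutate k B l i" for i l
    using anti[of l i] anti[of l k] anti[of k i] anti[of i k] anti[of k l]
    by (auto simp: mutate_def mult.commute)
  moreover have "mutate k B i l = 0" if "i \<notin> V \<or> l \<notin> V" for i l
    using that outside[of i l] outside[of i k] outside[of k l] by (auto simp: mutate_def)
  ultimately show ?thesis
    using assms unfolding quiver_def by blast
qed

lemma quiver_mutseq: "quiver V M B \<Longrightarrow> quiver V M (mutseq B m t)"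
  by (induction t) (simp_all add: quiver_mutate)

lemma complete_quiver_iff_tournament:
  assumes "quiver V M B"
  shows "complete_quiver V M B \<longleftrightarrow> tournament V M (orientation V M B)"
proof -
  have "B u w \<noteq> 0 \<longleftrightarrow> (0 < B u w \<longleftrightarrow> \<not> 0 < B w u)" for u w
    using quiver_antisym[OF assms, of w u] by linarith
  then show ?thesis
    by (auto simp: complete_quiver_def tournament_def orientation_def relevant_def)
qed

text \<open>If \<open>u, k, w\<close> is an oriented 3-cycle, the sign of the mutated entry is not determined by
arithmetic; the preservation of the cycle decides it.\<close>

lemma mutate_pos_iff:
  fixes B :: "'v \<Rightarrow> 'v \<Rightarrow> int"
  assumes antisym: "\<And>x y. B x y = - B y x"
    and nonzero: "B u k \<noteq> 0" "B k w \<noteq> 0" "B u w \<noteq> 0"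
    and off_k: "u \<noteq> k" "w \<noteq> k"
    and preserved: "cyclic3 B u k w \<Longrightarrow> cyclic3 (mutate k B) u k w"
  shows "0 < mutate k B u w \<longleftrightarrow> ((0 < B u w) \<noteq> cyclic3 B u k w)"
proof -
  have mutated: "mutate k B u w
      = B u w + max (B u k) 0 * max (B k w) 0 - max (- B u k) 0 * max (- B k w) 0"
    using off_k by (simp add: mutate_def)
  have at_k: "mutate k B u k = - B u k" "mutate k B k w = - B k w"
    "mutate k B k u = - B k u" "mutate k B w k = - B w k"
    by (simp_all add: mutate_def)
  have anti_uw: "mutate k B w u = - mutate k B u w"
    using off_k antisym[of w u] antisym[of w k] antisym[of k u] antisym[of u k] antisym[of k w]
    by (simp add: mutate_def mult.commute)
  consider (out_in) "0 < B u k" "0 < B k w" | (in_out) "0 < B k u" "0 < B w k"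
    | (mixed) "0 < B u k \<longleftrightarrow> B k w < 0"
    using nonzero antisym[of u k] antisym[of k w] by linarith
  then show ?thesis
  proof cases
    case out_in
    obtain p where "0 < p" "mutate k B u w = B u w + p"
      using mutated out_in by (intro that[of "B u k * B k w"]) simp_all
    then show ?thesis
      using out_in preserved at_k antisym[of w u] antisym[of u k] antisym[of k w] nonzero
      unfolding cyclic3_def by (cases "0 < B u w") auto
  next
    case in_out
    obtain p where "0 < p" "mutate k B u w = B u w - p"
      using mutated in_out antisym[of u k] antisym[of k w]
      by (intro that[of "B k u * B w k"]) simp_all
    then show ?thesis
      using in_out preserved at_k anti_uw antisym[of w u] antisym[of u k] antisym[of k w] nonzero
      unfolding cyclic3_def by (cases "0 < B u w") auto
  next
    case mixed
    then show ?thesis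
      using mutated antisym[of u k] antisym[of k w] nonzero unfolding cyclic3_def by auto
  qed
qed

lemma orientation_mutate:
  assumes q: "quiver V M B" and c: "complete_quiver V M B" and cp: "cycle_preserving V M B k"
  shows "orientation V M (mutate k B) = mutate_orientation k (orientation V M B)"
proof (intro ext)
  fix u w
  have k: "k \<in> M" "k \<in> V"
    using cp quiver_mutable_subset[OF q] by (auto simp: cycle_preserving_def)
  note anti = quiver_antisym[OF q]
  show "orientation V M (mutate k B) u w = mutate_orientation k (orientation V M B) u w"
  proof (cases "relevant V M u w")
    case False
    then show ?thesis
      by (auto simp: orientation_def mutate_orientation_def cyclic_triangle_def relevant_commute)
  next
    case uw: True
    show ?thesis
    proof (cases "u = k \<or> w = k")
      case True
      then show ?thesis
        using uw anti[of u w]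
        by (auto simp: orientation_def mutate_orientation_def mutate_def relevant_commute)
    next
      case False
      then have rel: "relevant V M u k" "relevant V M k w"
        using uw k by (auto simp: relevant_def)
      have preserved: "cyclic3 (mutate k B) u k w" if "cyclic3 B u k w"
      proof -
        have "card ({u, k, w} - M) \<le> 1"
          using uw k by (auto simp: relevant_def card_le_Suc0_iff_eq)
        then have "oriented_3cycle V M B u k w"
          using uw k False that by (auto simp: oriented_3cycle_def relevant_def)
        then show ?thesis
          using cp by (simp add: cycle_preserving_def oriented_3cycle_def)
      qed
      have "0 < mutate k B u w \<longleftrightarrow> ((0 < B u w) \<noteq> cyclic3 B u k w)"
        using c uw rel False preserved
        by (intro mutate_pos_iff anti) (auto simp: complete_quiver_def relevant_def)
      moreover have "cyclic3 B u k w = cyclic_triangle (orientation V M B) u k w"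
        using uw rel by (auto simp: cyclic3_def cyclic_triangle_def orientation_def relevant_commute)
      ultimately show ?thesis
        using uw False by (simp add: orientation_def mutate_orientation_def)
    qed
  qed
qed

lemma complete_quiver_mutseq:
  assumes "quiver V M B" "complete_quiver V M B" "\<forall>l. cycle_preserving V M (mutseq B m l) (m l)"
  shows "complete_quiver V M (mutseq B m t)"
proof (induction t)
  case 0
  show ?case
    using assms(2) by simp
next
  case (Suc t)
  have "tournament V M (orientation V M (mutseq B m t))"
    using Suc complete_quiver_iff_tournament quiver_mutseq assms(1) by blast
  then have "tournament V M (orientation V M (mutseq B m (Suc t)))"
    using orientation_mutate[OF quiver_mutseq[OF assms(1)] Suc] assms(3) tournament_mutate_orientation
    by simp
  then show ?case
    using complete_quiver_iff_tournament quiver_mutseq assms(1) by blast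
qed

lemma three_le_card_mutable:
  assumes "relevant_triangle V M a b c" "k \<in> M" "k \<notin> {a, b, c}"
  shows "3 \<le> card ({k, a, b, c} \<inter> M)"
proof -
  have "distinct [a, b, c]" "a \<in> M \<and> b \<in> M \<or> b \<in> M \<and> c \<in> M \<or> c \<in> M \<and> a \<in> M"
    using assms(1) by (auto simp: relevant_triangle_def relevant_def)
  then obtain x y where xy: "x \<in> {a, b, c}" "y \<in> {a, b, c}" "x \<noteq> y" "x \<in> M" "y \<in> M"
    by auto
  then have "card {k, x, y} = 3"
    using assms(3) by auto
  moreover have "{k, x, y} \<subseteq> {k, a, b, c} \<inter> M"
    using xy assms(2) by auto
  ultimately show ?thesis
    by (metis card_mono finite_Int finite.emptyI finite.insertI)
qed

lemma no_vortex_at_if_not_vortex_apex: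
  assumes "quiver V M B" "k \<in> M" "\<not> vortex_apex V M B k"
  shows "no_vortex_at V M (orientation V M B) k"
  unfolding no_vortex_at_def
proof (intro allI impI notI)
  fix a b c
  assume abc: "relevant_triangle V M a b c \<and> k \<notin> {a, b, c}"
    and "vortex (orientation V M B) k a b c"
  moreover have "B x y \<le> 0" if "0 < B y x" for x y
    using that quiver_antisym[OF assms(1), of x y] by simp
  ultimately have "cyclic3 B a b c"
    and "(\<forall>x\<in>{a, b, c}. B x k \<le> 0) \<or> (\<forall>x\<in>{a, b, c}. B k x \<le> 0)"
    by (auto simp: vortex_def cyclic_triangle_def cyclic3_def orientation_def)
  moreover have "k \<in> V" "a \<in> V" "b \<in> V" "c \<in> V" "distinct [k, a, b, c]"
    using abc assms(2) quiver_mutable_subset[OF assms(1)] by (auto simp: relevant_triangle_def relevant_def)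
  ultimately have "vortex_apex V M B k"
    using three_le_card_mutable[of V M a b c k] abc assms(2) unfolding vortex_apex_def by blast
  then show False
    using assms(3) by blast
qed

lemma sign_coherent_if_no_frozen_path:
  assumes q: "quiver V M B" and c: "complete_quiver V M B" and "V - M \<noteq> {}"
    and no_path: "\<forall>v\<in>M. \<not> on_frozen_path V M (orientation V M B) v"
  shows "sign_coherent V M B"
  unfolding sign_coherent_def
proof (intro ballI)
  fix v
  assume v: "v \<in> M"
  obtain f0 where f0: "f0 \<in> V - M"
    using assms(3) by blast
  have "v \<in> V" "v \<noteq> f0"
    using f0 v quiver_mutable_subset[OF q] by auto
  then have "B v f0 \<noteq> 0"
    using c f0 v unfolding complete_quiver_def by blast
  then have adjacent: "\<exists>f\<in>V - M. B v f \<noteq> 0"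
    using f0 by blast
  note anti = quiver_antisym[OF q]
  show "red V M B v \<or> green V M B v"
  proof (rule ccontr)
    assume "\<not> (red V M B v \<or> green V M B v)"
    then obtain f g where f: "f \<in> V - M" "B f v < 0" and g: "g \<in> V - M" "B v g < 0"
      using adjacent v by (auto simp: red_def green_def not_le)
    then have "orientation V M B v f" "orientation V M B g v"
      using anti[of f v] anti[of g v] v quiver_mutable_subset[OF q]
      by (auto simp: orientation_def relevant_def)
    then show False
      using no_path v f g by (auto simp: on_frozen_path_def)
  qed
qed

theorem mainTheorem14:
  fixes V M :: "'v set" and B :: "'v \<Rightarrow> 'v \<Rightarrow> int" and m :: "nat \<Rightarrow> 'v"
  assumes "quiver V M B"
    and "complete_quiver V M B"
    and "V - M \<noteq> {}"
    and "\<forall>l. m l \<in> M"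
    and "\<forall>l. m l \<noteq> m (Suc l)"
    and "\<forall>v\<in>M. infinite {l. m l = v}"
    and "\<forall>l. cycle_preserving V M (mutseq B m l) (m l)"
    and "\<not> vortex_apex V M B (m 0)"
  shows "\<exists>T. \<forall>j>T. sign_coherent V M (mutseq B m j)"
proof -
  have MV: "M \<subseteq> V" and "finite M"
    using assms(1) finite_subset quiver_mutable_subset unfolding quiver_def by blast+
  have complete: "complete_quiver V M (mutseq B m t)" for t
    using assms(1,2,7) by (rule complete_quiver_mutseq)
  interpret mutation_run V M "\<lambda>t. orientation V M (mutseq B m t)" m
  proof
    show "tournament V M (orientation V M (mutseq B m t))" for t
      using complete complete_quiver_iff_tournament quiver_mutseq assms(1) by blast
    show "orientation V M (mutseq B m (Suc t))
        = mutate_orientation (m t) (orientation V M (mutseq B m t))" for t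
      using orientation_mutate[OF quiver_mutseq[OF assms(1)] complete] assms(7) by simp
    show "no_vortex_at V M (orientation V M (mutseq B m 0)) (m 0)"
      using no_vortex_at_if_not_vortex_apex[OF assms(1) _ assms(8)] assms(4) by simp
    show "m (Suc t) \<noteq> m t" for t
      using assms(5) by metis
  qed (use MV assms(4) in auto)
  obtain T where "\<forall>t>T. \<forall>v\<in>M. \<not> on_frozen_path V M (orientation V M (mutseq B m t)) v"
    using eventually_no_frozen_path[OF \<open>finite M\<close>] assms(6) not_finite_existsD by blast
  then show ?thesis
    using sign_coherent_if_no_frozen_path quiver_mutseq[OF assms(1)] complete assms(3) by blast
qed

end
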